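(* For $n\ge2$, the group $VSPG_n$ is representable as the semi-direct product $VSPG_n=VS_{n-1}^*\rtimes VSPG_{n-1}=VS_{n-1}^*\rtimes\big(VS_{n-2}^*\rtimes(\cdots\rtimes(VS_2^*\rtimes VS_1^* )\cdots)\big)$, where $VS_{k-1}^*$, for $3\le k\le n$, are infinitely generated subgroups of $VSPG_n$, and $VS_1^*$ is a subgroup of rank $4$ (generated by $\mu_{12},\mu_{21},\gamma_{12},\gamma_{21}$).
   Context: $VSPG_n$ is the group generated by $\{\mu_{ij},\gamma_{ij}\mid 1\le i\ne j\le n\}$ with defining relations (distinct letters denote distinct indices): $\mu_{ij}\mu_{ik}\mu_{jk}=\mu_{jk}\mu_{ik}\mu_{ij}$; $\mu_{ij}\mu_{ik}\gamma_{jk}=\gamma_{jk}\mu_{ik}\mu_{ij}$; $\gamma_{ij}\mu_{ik}\mu_{jk}=\mu_{jk}\mu_{ik}\gamma_{ij}$; $\mu_{ij}\gamma_{ji}=\gamma_{ij}\mu_{ji}$; $\mu_{ij}\mu_{kl}=\mu_{kl}\mu_{ij}$, $\gamma_{ij}\gamma_{kl}=\gamma_{kl}\gamma_{ij}$, $\mu_{ij}\gamma_{kl}=\gamma_{kl}\mu_{ij}$ (the virtual singular pure braid group, i.e. the kernel of the permutation homomorphism on the virtual singular braid group $VSG_n$). For $k<n$, $VSPG_k$ is identified with the subgroup of $VSPG_n$ generated by $\mu_{ij},\gamma_{ij}$ with $i,j\le k$. For $2\le i\le n$, $VS_{i-1}$ is the subgroup generated by $\mu_{1i},\dots,\mu_{i-1,i},\mu_{i1},\dots,\mu_{i,i-1},\gamma_{1i},\dots,\gamma_{i-1,i},\gamma_{i1},\dots,\gamma_{i,i-1}$,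 and $VS_{i-1}^*$ is the normal closure of $VS_{i-1}$ in $VSPG_i$; $VSPG_2=VS_1=VS_1^*$. *)

theory Defs
  imports "HOL-Algebra.Algebra"
begin

datatype gen = Mu nat nat | Ga nat nat

text \<open>A letter is a generator together with an exponent sign (True = +1, False = -1).\<close>
type_synonym letter = "gen \<times> bool"
type_synonym word = "letter list"

fun valid_gen :: "nat \<Rightarrow> gen \<Rightarrow> bool" where
  "valid_gen n (Mu i j) = (1 \<le> i \<and> i \<le> n \<and> 1 \<le> j \<and> j \<le> n \<and> i \<noteq> j)"
| "valid_gen n (Ga i j) = (1 \<le> i \<and> i \<le> n \<and> 1 \<le> j \<and> j \<le> n \<and> i \<noteq> j)"

definition words :: "nat \<Rightarrow> word set" where
  "words n = {w. \<forall>x \<in> set w. valid_gen n (fst x)}"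

definition inv_letter :: "letter \<Rightarrow> letter" where
  "inv_letter x = (fst x, \<not> snd x)"

definition mu :: "nat \<Rightarrow> nat \<Rightarrow> word" where "mu i j = [(Mu i j, True)]"
definition ga :: "nat \<Rightarrow> nat \<Rightarrow> word" where "ga i j = [(Ga i j, True)]"

definition in_range :: "nat \<Rightarrow> nat \<Rightarrow> bool" where
  "in_range n i = (1 \<le> i \<and> i \<le> n)"

definition vspg_rels :: "nat \<Rightarrow> (word \<times> word) set" where
  "vspg_rels n =
     {(mu i j @ mu i k @ mu j k, mu j k @ mu i k @ mu i j) | i j k.
        in_range n i \<and> in_range n j \<and> in_range n k \<and> distinct [i, j, k]}
   \<union> {(mu i j @ mu i k @ ga j k, ga j k @ mu i k @ mu i j) | i j k.
        in_range n i \<and> in_range n j \<and> in_range n k \<and> distinct [i, j, k]}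
   \<union> {(ga i j @ mu i k @ mu j k, mu j k @ mu i k @ ga i j) | i j k.
        in_range n i \<and> in_range n j \<and> in_range n k \<and> distinct [i, j, k]}
   \<union> {(mu i j @ ga j i, ga i j @ mu j i) | i j.
        in_range n i \<and> in_range n j \<and> i \<noteq> j}
   \<union> {(mu i j @ mu k l, mu k l @ mu i j) | i j k l.
        in_range n i \<and> in_range n j \<and> in_range n k \<and> in_range n l \<and> distinct [i, j, k, l]}
   \<union> {(ga i j @ ga k l, ga k l @ ga i j) | i j k l.
        in_range n i \<and> in_range n j \<and> in_range n k \<and> in_range n l \<and> distinct [i, j, k, l]}
   \<union> {(mu i j @ ga k l, ga k l @ mu i j) | i j k l.
        in_range n i \<and> in_range n j \<and> in_range n k \<and> in_range n l \<and> distinct [i, j, k, l]}"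

inductive vspg_eq :: "nat \<Rightarrow> word \<Rightarrow> word \<Rightarrow> bool" for n where
  refl: "w \<in> words n \<Longrightarrow> vspg_eq n w w"
| sym: "vspg_eq n u v \<Longrightarrow> vspg_eq n v u"
| trans: "vspg_eq n u v \<Longrightarrow> vspg_eq n v w \<Longrightarrow> vspg_eq n u w"
| cancel: "u \<in> words n \<Longrightarrow> v \<in> words n \<Longrightarrow> valid_gen n (fst x) \<Longrightarrow>
           vspg_eq n (u @ [x, inv_letter x] @ v) (u @ v)"
| rel: "(l, r) \<in> vspg_rels n \<Longrightarrow> u \<in> words n \<Longrightarrow> v \<in> words n \<Longrightarrow>
           vspg_eq n (u @ l @ v) (u @ r @ v)"

definition vspg_R :: "nat \<Rightarrow> (word \<times> word) set" where
  "vspg_R n = {(u, v). vspg_eq n u v}"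

definition VSPG :: "nat \<Rightarrow> word set monoid" where
  "VSPG n = \<lparr> carrier = words n // vspg_R n,
              monoid.mult = (\<lambda>A B. \<Union>a\<in>A. \<Union>b\<in>B. vspg_R n `` {a @ b}),
              one = vspg_R n `` {[]} \<rparr>"

definition mu_el :: "nat \<Rightarrow> nat \<Rightarrow> nat \<Rightarrow> word set" where
  "mu_el n i j = vspg_R n `` {mu i j}"
definition ga_el :: "nat \<Rightarrow> nat \<Rightarrow> nat \<Rightarrow> word set" where
  "ga_el n i j = vspg_R n `` {ga i j}"

text \<open>VSPG_k, viewed inside VSPG_n: generated by mu_ij, ga_ij with i, j \<le> k.\<close>
definition VSPG_sub :: "nat \<Rightarrow> nat \<Rightarrow> word set set" where
  "VSPG_sub n k = generate (VSPG n)
     ({mu_el n i j | i j. in_range k i \<and> in_range k j \<and> i \<noteq> j}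
      \<union> {ga_el n i j | i j. in_range k i \<and> in_range k j \<and> i \<noteq> j})"

text \<open>Generators of VS_{i-1} (inside VSPG_n).\<close>
definition VS_gens :: "nat \<Rightarrow> nat \<Rightarrow> word set set" where
  "VS_gens n i = {x. \<exists>j. 1 \<le> j \<and> j < i \<and>
      (x = mu_el n j i \<or> x = mu_el n i j \<or> x = ga_el n j i \<or> x = ga_el n i j)}"

definition normal_closure :: "('a, 'b) monoid_scheme \<Rightarrow> 'a set \<Rightarrow> 'a set" where
  "normal_closure G S =
     generate G (\<Union>g\<in>carrier G. (\<lambda>s. g \<otimes>\<^bsub>G\<^esub> s \<otimes>\<^bsub>G\<^esub> inv\<^bsub>G\<^esub> g) ` S)"

definition VS :: "nat \<Rightarrow> nat \<Rightarrow> word set set" where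
  "VS n m = generate (VSPG n) (VS_gens n (m + 1))"

definition VS_star :: "nat \<Rightarrow> nat \<Rightarrow> word set set" where
  "VS_star n m = normal_closure ((VSPG n)\<lparr>carrier := VSPG_sub n (m + 1)\<rparr>) (VS_gens n (m + 1))"

definition internal_semidirect :: "('a, 'b) monoid_scheme \<Rightarrow> 'a set \<Rightarrow> 'a set \<Rightarrow> bool" where
  "internal_semidirect G N H \<longleftrightarrow>
     group G \<and> N \<lhd> G \<and> subgroup H G \<and> N \<inter> H = {\<one>\<^bsub>G\<^esub>} \<and> N <#>\<^bsub>G\<^esub> H = carrier G"

definition finitely_generated_subgroup :: "('a, 'b) monoid_scheme \<Rightarrow> 'a set \<Rightarrow> bool" where
  "finitely_generated_subgroup G H \<longleftrightarrow> (\<exists>S. finite S \<and> S \<subseteq> H \<and> generate G S = H)"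

end

theory Submission
  imports Defs
begin

(*
  Deleting every generator that involves the index k is compatible with the defining relations
  (each relation either survives intact or collapses to a trivial one), so it induces an
  endomorphism of VSPG_n that fixes VSPG_(k-1) and kills the deleted generators. Hence the normal
  closure VS_(k-1)^* of those generators in VSPG_k meets VSPG_(k-1) trivially, and together they
  generate VSPG_k: this is the semidirect decomposition.

  For k >= 3, VSPG_n maps to the wreath product Z wr Z (integer lamps with a lamplighter): mu_12
  moves the lamplighter and mu_1k switches on the lamp at the origin. The normal closure VS_(k-1)^*
  lands in the base group of lamps, and conjugating mu_1k by powers of mu_12 lights lamps
  arbitrarily far out, which no finitely generated subgroup of the base group can do.
*)

section \<open>Normal closures and internal semidirect products\<close>

context group
begin

lemma normal_closure_normal:
  assumes K: "subgroup K G" and T: "T \<subseteq> K"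
  shows "normal_closure (G\<lparr>carrier := K\<rparr>) T \<lhd> G\<lparr>carrier := K\<rparr>"
proof -
  interpret K: group "G\<lparr>carrier := K\<rparr>"
    using K by (rule subgroup_imp_group)
  let ?conj = "\<lambda>g s. g \<otimes>\<^bsub>G\<lparr>carrier := K\<rparr>\<^esub> s \<otimes>\<^bsub>G\<lparr>carrier := K\<rparr>\<^esub> inv\<^bsub>G\<lparr>carrier := K\<rparr>\<^esub> g"
  let ?C = "\<Union>g\<in>K. ?conj g ` T"
  have conj_conj: "?conj g (?conj g' s) = ?conj (g \<otimes> g') s" if "g \<in> K" "g' \<in> K" "s \<in> K" for g g' s
    using that K
    by (simp add: m_inv_consistent subgroup.m_closed subgroup.mem_carrier m_assoc inv_mult_group)
  have "?C \<subseteq> K"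
    using T K by (auto simp: m_inv_consistent subgroup.m_closed subgroup.m_inv_closed)
  moreover have "?conj g h \<in> ?C" if "h \<in> ?C" "g \<in> K" for g h
  proof -
    from that(1) obtain g' s where "g' \<in> K" "s \<in> T" "h = ?conj g' s"
      by blast
    moreover have "g \<otimes> g' \<in> K"
      using that(2) \<open>g' \<in> K\<close> K by (simp add: subgroup.m_closed)
    ultimately show ?thesis
      using that(2) T conj_conj[of g g' s] by blast
  qed
  ultimately show ?thesis
    unfolding normal_closure_def by (intro K.normal_generateI) simp_all
qed

lemma normal_closure_subgroup:
  assumes "subgroup K G" "T \<subseteq> K"
  shows "subgroup (normal_closure (G\<lparr>carrier := K\<rparr>) T) G"
  using normal_imp_subgroup[OF normal_closure_normal[OF assms]] assms(1) incl_subgroup by blast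

lemma conj_in_normal_closure:
  assumes "subgroup K G" "g \<in> K" "t \<in> T"
  shows "g \<otimes> t \<otimes> inv g \<in> normal_closure (G\<lparr>carrier := K\<rparr>) T"
proof -
  have "g \<otimes> t \<otimes> inv g = g \<otimes>\<^bsub>G\<lparr>carrier := K\<rparr>\<^esub> t \<otimes>\<^bsub>G\<lparr>carrier := K\<rparr>\<^esub> inv\<^bsub>G\<lparr>carrier := K\<rparr>\<^esub> g"
    using assms by (simp add: m_inv_consistent)
  then show ?thesis
    unfolding normal_closure_def using assms
    by (intro generate.incl UN_I[of g] image_eqI) simp_all
qed

lemma subset_normal_closure:
  assumes "subgroup K G" "T \<subseteq> K"
  shows "T \<subseteq> normal_closure (G\<lparr>carrier := K\<rparr>) T"
proof
  fix t assume "t \<in> T"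
  then have "t = \<one> \<otimes> t \<otimes> inv \<one>"
    using assms subgroup.mem_carrier by fastforce
  then show "t \<in> normal_closure (G\<lparr>carrier := K\<rparr>) T"
    using conj_in_normal_closure[OF assms(1) subgroup.one_closed[OF assms(1)] \<open>t \<in> T\<close>] by simp
qed

lemma normal_closure_subset:
  assumes "subgroup K G" "T \<subseteq> K" "M \<lhd> G" "T \<subseteq> M"
  shows "normal_closure (G\<lparr>carrier := K\<rparr>) T \<subseteq> M"
proof -
  interpret K: group "G\<lparr>carrier := K\<rparr>"
    using assms(1) by (rule subgroup_imp_group)
  have "subgroup (M \<inter> K) (G\<lparr>carrier := K\<rparr>)"
    using normal_imp_subgroup[OF normal_Int_subgroup[OF assms(1,3)]] .
  moreover have "g \<otimes> s \<otimes> inv g \<in> M \<inter> K" if "g \<in> K" "s \<in> T" for g s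
    using that assms by (auto simp: normal.inv_op_closed2 subgroup.mem_carrier subgroup.m_closed subgroup.m_inv_closed)
  ultimately have "normal_closure (G\<lparr>carrier := K\<rparr>) T \<subseteq> M \<inter> K"
    unfolding normal_closure_def using assms(1)
    by (intro K.generate_subgroup_incl) (auto simp: m_inv_consistent)
  then show ?thesis
    by blast
qed

lemma normal_closure_generating_set:
  assumes "subgroup K G" "K = generate G T"
  shows "normal_closure (G\<lparr>carrier := K\<rparr>) T = K"
proof
  have "T \<subseteq> K"
    by (subst assms(2)) (rule subsetI, rule generate.incl)
  show "normal_closure (G\<lparr>carrier := K\<rparr>) T \<subseteq> K"
    using subgroup.subset[OF normal_imp_subgroup[OF normal_closure_normal[OF assms(1) \<open>T \<subseteq> K\<close>]]]
    by simp
  show "K \<subseteq> normal_closure (G\<lparr>carrier := K\<rparr>) T"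
    using generate_subgroup_incl[OF subset_normal_closure normal_closure_subgroup, OF assms(1) \<open>T \<subseteq> K\<close> assms(1) \<open>T \<subseteq> K\<close>]
    by (subst (1) assms(2))
qed

lemma set_mult_normal_eq_carrier:
  assumes N: "N \<lhd> G" and H: "subgroup H G"
    and gen: "carrier G = generate G (S \<union> T)" "S \<subseteq> H" "T \<subseteq> N"
  shows "N <#> H = carrier G"
proof
  show "N <#> H \<subseteq> carrier G"
    using N H by (simp add: setmult_subset_G normal_imp_subgroup subgroup.subset)
  have prod: "a \<otimes> b \<in> N <#> H" if "a \<in> N" "b \<in> H" for a b
    using that unfolding set_mult_def by blast
  have "h \<in> N <#> H" if "h \<in> H" for h
    using prod[of \<one> h] that N H by (simp add: normal_imp_subgroup subgroup.one_closed subgroup.mem_carrier)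
  moreover have "t \<in> N <#> H" if "t \<in> N" for t
    using prod[of t \<one>] that N H
    by (simp add: normal_imp_subgroup subgroup.one_closed subgroup.mem_carrier[of N])
  ultimately have "S \<union> T \<subseteq> N <#> H"
    using gen(2,3) by blast
  then show "carrier G \<subseteq> N <#> H"
    unfolding gen(1) using N H by (intro generate_subgroup_incl mult_norm_subgroup)
qed

lemma internal_semidirect_normal_closure:
  assumes K: "subgroup K G" and H: "subgroup H G" "H \<subseteq> K" and T: "T \<subseteq> K"
    and K_gen: "K = generate G (S \<union> T)" "S \<subseteq> H"
    and rho: "group_hom G G' rho" "inj_on rho H" "\<And>t. t \<in> T \<Longrightarrow> rho t = \<one>\<^bsub>G'\<^esub>"
  shows "internal_semidirect (G\<lparr>carrier := K\<rparr>) (normal_closure (G\<lparr>carrier := K\<rparr>) T) H"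
proof -
  interpret K: group "G\<lparr>carrier := K\<rparr>"
    using K by (rule subgroup_imp_group)
  define N where "N = normal_closure (G\<lparr>carrier := K\<rparr>) T"
  have N_normal: "N \<lhd> G\<lparr>carrier := K\<rparr>"
    unfolding N_def using K T by (rule normal_closure_normal)
  have H_sub: "subgroup H (G\<lparr>carrier := K\<rparr>)"
    using H K by (intro subgroup_incl)
  have N_ker: "N \<subseteq> kernel G G' rho"
    unfolding N_def using K T rho(3) subgroup.mem_carrier[OF K]
    by (intro normal_closure_subset group_hom.normal_kernel[OF rho(1)]) (auto simp: kernel_def)
  have "x = \<one>" if "x \<in> N" "x \<in> H" for x
  proof (rule inj_onD[OF rho(2)])
    show "rho x = rho \<one>"
      using that(1) N_ker group_hom.hom_one[OF rho(1)] by (auto simp: kernel_def)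
  qed (use that H in \<open>simp_all add: subgroup.one_closed\<close>)
  then have "N \<inter> H = {\<one>}"
    using normal_closure_subgroup[OF K T] H by (auto simp: N_def subgroup.one_closed)
  moreover have "N <#>\<^bsub>G\<lparr>carrier := K\<rparr>\<^esub> H = K"
  proof -
    have "S \<union> T \<subseteq> K"
      using K_gen(2) H(2) T by blast
    then have "carrier (G\<lparr>carrier := K\<rparr>) = generate (G\<lparr>carrier := K\<rparr>) (S \<union> T)"
      using generate_consistent[OF _ K] K_gen(1) by simp
    then show ?thesis
      using K.set_mult_normal_eq_carrier[OF N_normal H_sub _ K_gen(2) subset_normal_closure[OF K T, folded N_def]]
      by simp
  qed
  ultimately show ?thesis
    unfolding internal_semidirect_def N_def[symmetric]
    using K.group_axioms N_normal H_sub by simp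
qed

end

lemma (in group_hom) subgroup_vimage:
  assumes "subgroup K H"
  shows "subgroup {x \<in> carrier G. h x \<in> K} G"
proof (rule G.subgroupI)
  show "{x \<in> carrier G. h x \<in> K} \<noteq> {}"
    using assms by (auto intro!: exI[of _ \<one>] simp: subgroup.one_closed)
qed (use assms in \<open>auto simp: subgroup.m_closed subgroup.m_inv_closed\<close>)

section \<open>The wreath product of the integers with itself\<close>

text \<open>The lamplighter group \<open>\<int> \<wr> \<int>\<close>: finitely supported configurations of integer lamps
  together with the position of the lamplighter.\<close>

definition int_wreath :: "((int \<Rightarrow> int) \<times> int) monoid" where
  "int_wreath =
     \<lparr>carrier = {p. finite {x. fst p x \<noteq> 0}},
      monoid.mult = (\<lambda>p q. (\<lambda>x. fst p x + fst q (x - snd p), snd p + snd q)),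
      one = (\<lambda>_. 0, 0)\<rparr>"

lemma mult_int_wreath:
  "p \<otimes>\<^bsub>int_wreath\<^esub> q = (\<lambda>x. fst p x + fst q (x - snd p), snd p + snd q)"
  by (simp add: int_wreath_def)

lemma one_int_wreath: "\<one>\<^bsub>int_wreath\<^esub> = (\<lambda>_. 0, 0)"
  by (simp add: int_wreath_def)

lemma finite_support_shift:
  fixes f :: "int \<Rightarrow> int"
  shows "finite {x. f x \<noteq> 0} \<Longrightarrow> finite {x. f (x - s) \<noteq> 0}"
proof -
  assume "finite {x. f x \<noteq> 0}"
  moreover have "{x. f (x - s) \<noteq> 0} = (\<lambda>x. x + s) ` {x. f x \<noteq> 0}"
    by (auto simp: image_iff) (metis diff_add_cancel)
  ultimately show ?thesis
    by simp
qed

lemma group_int_wreath: "group int_wreath"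
proof (rule groupI)
  fix p q assume "p \<in> carrier int_wreath" "q \<in> carrier int_wreath"
  then have "finite ({x. fst p x \<noteq> 0} \<union> {x. fst q (x - snd p) \<noteq> 0})"
    by (simp add: int_wreath_def finite_support_shift)
  moreover have "{x. fst p x + fst q (x - snd p) \<noteq> 0} \<subseteq> {x. fst p x \<noteq> 0} \<union> {x. fst q (x - snd p) \<noteq> 0}"
    by auto
  ultimately show "p \<otimes>\<^bsub>int_wreath\<^esub> q \<in> carrier int_wreath"
    by (simp add: int_wreath_def finite_subset)
next
  fix p assume p: "p \<in> carrier int_wreath"
  let ?q = "(\<lambda>x. - fst p (x + snd p), - snd p)"
  have "?q \<in> carrier int_wreath"
    using finite_support_shift[of "fst p" "- snd p"] p by (simp add: int_wreath_def)
  moreover have "?q \<otimes>\<^bsub>int_wreath\<^esub> p = \<one>\<^bsub>int_wreath\<^esub>"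
    by (simp add: int_wreath_def)
  ultimately show "\<exists>q\<in>carrier int_wreath. q \<otimes>\<^bsub>int_wreath\<^esub> p = \<one>\<^bsub>int_wreath\<^esub>"
    by blast
qed (auto simp: int_wreath_def fun_eq_iff algebra_simps)

lemma inv_int_wreath:
  "p \<in> carrier int_wreath \<Longrightarrow> inv\<^bsub>int_wreath\<^esub> p = (\<lambda>x. - fst p (x + snd p), - snd p)"
  using finite_support_shift[of "fst p" "- snd p"]
  by (intro group.inv_equality[OF group_int_wreath]) (simp_all add: int_wreath_def)

lemma snd_hom_int_wreath: "snd \<in> hom int_wreath integer_group"
  by (rule homI) (simp_all add: int_wreath_def)

interpretation W: group int_wreath
  by (rule group_int_wreath)

lemma conj_shift_int_wreath:
  assumes "(f, 0) \<in> carrier int_wreath"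
  shows "(\<lambda>_. 0, s) \<otimes>\<^bsub>int_wreath\<^esub> (f, 0) \<otimes>\<^bsub>int_wreath\<^esub> inv\<^bsub>int_wreath\<^esub> (\<lambda>_. 0, s) = (\<lambda>x. f (x - s), 0)"
proof -
  have "(\<lambda>_. 0::int, s) \<in> carrier int_wreath"
    by (simp add: int_wreath_def)
  then show ?thesis
    by (simp add: inv_int_wreath mult_int_wreath)
qed

definition bounded_base :: "int \<Rightarrow> ((int \<Rightarrow> int) \<times> int) set" where
  "bounded_base D = {p. snd p = 0 \<and> (\<forall>x. D < \<bar>x\<bar> \<longrightarrow> fst p x = 0)}"

lemma subgroup_bounded_base: "subgroup (bounded_base D) int_wreath"
proof (rule W.subgroupI)
  have support: "{x. fst p x \<noteq> 0} \<subseteq> {-D..D}" if "p \<in> bounded_base D" for p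
  proof
    fix x assume "x \<in> {x. fst p x \<noteq> 0}"
    then have "\<not> D < \<bar>x\<bar>"
      using that by (auto simp: bounded_base_def)
    then show "x \<in> {-D..D}"
      by (simp add: not_less abs_le_iff)
  qed
  show "bounded_base D \<subseteq> carrier int_wreath"
  proof
    fix p assume "p \<in> bounded_base D"
    then have "finite {x. fst p x \<noteq> 0}"
      by (rule finite_subset[OF support finite_atLeastAtMost_int])
    then show "p \<in> carrier int_wreath"
      by (simp add: int_wreath_def)
  qed
  have "(\<lambda>_. 0, 0) \<in> bounded_base D"
    by (simp add: bounded_base_def)
  then show "bounded_base D \<noteq> {}"
    by blast
  show "inv\<^bsub>int_wreath\<^esub> p \<in> bounded_base D" if p: "p \<in> bounded_base D" for p
  proof -
    have "p \<in> carrier int_wreath"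
      using p \<open>bounded_base D \<subseteq> carrier int_wreath\<close> by blast
    with p show ?thesis
      by (simp add: inv_int_wreath bounded_base_def)
  qed
  show "p \<otimes>\<^bsub>int_wreath\<^esub> q \<in> bounded_base D" if "p \<in> bounded_base D" "q \<in> bounded_base D" for p q
    using that by (simp add: mult_int_wreath bounded_base_def)
qed

lemma finitely_generated_bounded_base:
  assumes \<phi>: "group_hom G int_wreath \<phi>" and L: "subgroup L G" "finitely_generated_subgroup G L"
    and shift: "\<And>x. x \<in> L \<Longrightarrow> snd (\<phi> x) = 0"
  obtains D where "L \<subseteq> {x \<in> carrier G. \<phi> x \<in> bounded_base D}"
proof -
  interpret \<phi>: group_hom G int_wreath \<phi>
    by (rule \<phi>)
  obtain S where S: "finite S" "S \<subseteq> L" "generate G S = L"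
    using L(2) unfolding finitely_generated_subgroup_def by blast
  define D where "D = Max (insert 0 (\<Union>s\<in>S. abs ` {x. fst (\<phi> s) x \<noteq> 0}))"
  have S_carrier: "S \<subseteq> carrier G"
    using S(2) subgroup.subset[OF L(1)] by blast
  have "finite {x. fst (\<phi> s) x \<noteq> 0}" if "s \<in> S" for s
    using \<phi>.hom_closed that S_carrier by (auto simp: int_wreath_def)
  then have "\<bar>x\<bar> \<le> D" if "s \<in> S" "fst (\<phi> s) x \<noteq> 0" for s x
    unfolding D_def using that S(1) by (intro Max_ge) auto
  then have "S \<subseteq> {x \<in> carrier G. \<phi> x \<in> bounded_base D}"
    using S(2) S_carrier shift unfolding bounded_base_def by (auto simp: not_le[symmetric])
  then have "L \<subseteq> {x \<in> carrier G. \<phi> x \<in> bounded_base D}"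
    unfolding S(3)[symmetric]
    by (intro \<phi>.G.generate_subgroup_incl \<phi>.subgroup_vimage subgroup_bounded_base)
  then show ?thesis
    by (rule that)
qed

section \<open>Words and the presentation of VSPG_n\<close>

abbreviation cls :: "nat \<Rightarrow> word \<Rightarrow> word set" where
  "cls n w \<equiv> vspg_R n `` {w}"

lemma words_Nil [simp]: "[] \<in> words n"
  by (simp add: words_def)

lemma words_Cons [simp]: "x # w \<in> words n \<longleftrightarrow> valid_gen n (fst x) \<and> w \<in> words n"
  by (auto simp: words_def)

lemma words_append [simp]: "u @ w \<in> words n \<longleftrightarrow> u \<in> words n \<and> w \<in> words n"
  by (auto simp: words_def)

lemma valid_gen_mono: "valid_gen m g \<Longrightarrow> m \<le> n \<Longrightarrow> valid_gen n g"
  by (cases g) auto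

lemma words_mono: "m \<le> n \<Longrightarrow> words m \<subseteq> words n"
  by (auto simp: words_def intro: valid_gen_mono)

lemma vspg_rels_words: "(l, r) \<in> vspg_rels n \<Longrightarrow> l \<in> words n \<and> r \<in> words n"
  unfolding vspg_rels_def mu_def ga_def in_range_def by (auto simp: words_def)

lemma vspg_eq_words: "vspg_eq n u v \<Longrightarrow> u \<in> words n \<and> v \<in> words n"
  by (induction rule: vspg_eq.induct) (auto simp: inv_letter_def dest: vspg_rels_words)

lemma vspg_eq_append:
  assumes "vspg_eq n u u'" "vspg_eq n v v'"
  shows "vspg_eq n (u @ v) (u' @ v')"
proof -
  have right: "vspg_eq n (u @ w) (u' @ w)" if "vspg_eq n u u'" "w \<in> words n" for u u' w
    using that
  proof (induction rule: vspg_eq.induct)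
    case (refl u) then show ?case by (simp add: vspg_eq.refl)
  next
    case (sym u v) then show ?case by (simp add: vspg_eq.sym)
  next
    case (trans u v u') then show ?case by (metis vspg_eq.trans)
  next
    case (cancel u v x) then show ?case using vspg_eq.cancel[of u n "v @ w" x] by simp
  next
    case (rel l r u v) then show ?case using vspg_eq.rel[of l r n u "v @ w"] by simp
  qed
  have left: "vspg_eq n (w @ v) (w @ v')" if "vspg_eq n v v'" "w \<in> words n" for v v' w
    using that
  proof (induction rule: vspg_eq.induct)
    case (refl u) then show ?case by (simp add: vspg_eq.refl)
  next
    case (sym u v) then show ?case by (simp add: vspg_eq.sym)
  next
    case (trans u v u') then show ?case by (metis vspg_eq.trans)
  next
    case (cancel u v x) then show ?case using vspg_eq.cancel[of "w @ u" n v x] by simp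
  next
    case (rel l r u v) then show ?case using vspg_eq.rel[of l r n "w @ u" v] by simp
  qed
  show ?thesis
    using assms right left vspg_eq_words by (meson vspg_eq.trans)
qed

lemma equiv_vspg_R: "equiv (words n) (vspg_R n)"
  unfolding equiv_def refl_on_def sym_def trans_def vspg_R_def
  by (auto dest: vspg_eq_words intro: vspg_eq.refl vspg_eq.sym vspg_eq.trans)

lemma mem_cls_iff: "v \<in> cls n u \<longleftrightarrow> vspg_eq n u v"
  by (simp add: vspg_R_def)

lemma cls_eqI: "vspg_eq n u v \<Longrightarrow> cls n u = cls n v"
  using equiv_class_eq[OF equiv_vspg_R] by (simp add: vspg_R_def)

lemma carrier_VSPG: "carrier (VSPG n) = cls n ` words n"
  by (auto simp: VSPG_def quotient_def)

lemma one_VSPG: "\<one>\<^bsub>VSPG n\<^esub> = cls n []"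
  by (simp add: VSPG_def)

lemma mult_VSPG_cls:
  assumes "u \<in> words n" "v \<in> words n"
  shows "cls n u \<otimes>\<^bsub>VSPG n\<^esub> cls n v = cls n (u @ v)"
proof -
  have "cls n (a @ b) = cls n (u @ v)" if "a \<in> cls n u" "b \<in> cls n v" for a b
    using that by (metis cls_eqI vspg_eq_append mem_cls_iff vspg_eq.sym)
  then have "(\<Union>a\<in>cls n u. \<Union>b\<in>cls n v. cls n (a @ b)) = (\<Union>a\<in>cls n u. \<Union>b\<in>cls n v. cls n (u @ v))"
    by (intro SUP_cong) simp_all
  moreover have "u \<in> cls n u" "v \<in> cls n v"
    using assms by (simp_all add: vspg_R_def vspg_eq.refl)
  ultimately show ?thesis
    by (simp add: VSPG_def) blast
qed

definition inv_word :: "word \<Rightarrow> word" where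
  "inv_word w = rev (map inv_letter w)"

lemma inv_word_words [simp]: "inv_word w \<in> words n \<longleftrightarrow> w \<in> words n"
  by (auto simp: inv_word_def words_def inv_letter_def)

lemma vspg_eq_inv_word: "w \<in> words n \<Longrightarrow> vspg_eq n (inv_word w @ w) []"
proof (induction w rule: rev_induct)
  case Nil then show ?case by (simp add: inv_word_def vspg_eq.refl)
next
  case (snoc x w)
  then have "vspg_eq n ([] @ [inv_letter x, x] @ []) []"
    using vspg_eq.cancel[of "[]" n "[]" "inv_letter x"] by (simp add: inv_letter_def)
  moreover have "vspg_eq n ([inv_letter x] @ (inv_word w @ w) @ [x]) ([inv_letter x] @ [] @ [x])"
    using snoc by (intro vspg_eq_append vspg_eq.refl) (auto simp: inv_letter_def)
  ultimately show ?case
    by (simp add: inv_word_def) (metis append.assoc append_Cons append_Nil vspg_eq.trans)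
qed

lemma cls_in_carrier [simp]: "w \<in> words n \<Longrightarrow> cls n w \<in> carrier (VSPG n)"
  by (simp add: carrier_VSPG)

lemma carrier_VSPG_E:
  assumes "x \<in> carrier (VSPG n)"
  obtains w where "w \<in> words n" "x = cls n w"
  using assms by (auto simp: carrier_VSPG)

lemma group_VSPG: "group (VSPG n)"
proof (rule groupI)
  fix x y assume "x \<in> carrier (VSPG n)" "y \<in> carrier (VSPG n)"
  then show "x \<otimes>\<^bsub>VSPG n\<^esub> y \<in> carrier (VSPG n)"
    by (elim carrier_VSPG_E) (simp add: mult_VSPG_cls)
next
  fix x y z assume "x \<in> carrier (VSPG n)" "y \<in> carrier (VSPG n)" "z \<in> carrier (VSPG n)"
  then show "x \<otimes>\<^bsub>VSPG n\<^esub> y \<otimes>\<^bsub>VSPG n\<^esub> z = x \<otimes>\<^bsub>VSPG n\<^esub> (y \<otimes>\<^bsub>VSPG n\<^esub> z)"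
    by (elim carrier_VSPG_E) (simp add: mult_VSPG_cls)
next
  fix x assume "x \<in> carrier (VSPG n)"
  then show "\<one>\<^bsub>VSPG n\<^esub> \<otimes>\<^bsub>VSPG n\<^esub> x = x"
    by (elim carrier_VSPG_E) (simp add: mult_VSPG_cls one_VSPG)
next
  fix x assume "x \<in> carrier (VSPG n)"
  then obtain w where "w \<in> words n" "x = cls n w"
    by (rule carrier_VSPG_E)
  then show "\<exists>y\<in>carrier (VSPG n). y \<otimes>\<^bsub>VSPG n\<^esub> x = \<one>\<^bsub>VSPG n\<^esub>"
    using cls_eqI[OF vspg_eq_inv_word]
    by (intro bexI[of _ "cls n (inv_word w)"]) (simp_all add: mult_VSPG_cls one_VSPG)
qed (simp add: one_VSPG)

lemma inv_VSPG_cls: "w \<in> words n \<Longrightarrow> inv\<^bsub>VSPG n\<^esub> (cls n w) = cls n (inv_word w)"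
  using cls_eqI[OF vspg_eq_inv_word]
  by (intro group.inv_equality[OF group_VSPG]) (simp_all add: mult_VSPG_cls one_VSPG)

text \<open>The value of \<open>f\<close> at an arbitrary representative; meaningful only when \<open>f\<close> respects
  \<open>vspg_eq\<close>, as in the locale below.\<close>

definition induced :: "(word \<Rightarrow> 'a) \<Rightarrow> word set \<Rightarrow> 'a" where
  "induced f A = f (SOME w. w \<in> A)"

locale vspg_word_hom = target: group H for H (structure) +
  fixes n :: nat and f :: "word \<Rightarrow> 'a"
  assumes f_carrier: "w \<in> words n \<Longrightarrow> f w \<in> carrier H"
    and f_append: "u \<in> words n \<Longrightarrow> v \<in> words n \<Longrightarrow> f (u @ v) = f u \<otimes> f v"
    and f_cancel: "valid_gen n (fst x) \<Longrightarrow> f [x, inv_letter x] = \<one>"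
    and f_rel: "(l, r) \<in> vspg_rels n \<Longrightarrow> f l = f r"
begin

lemma f_respects_vspg_eq: "vspg_eq n u v \<Longrightarrow> f u = f v"
proof (induction rule: vspg_eq.induct)
  case (cancel u v x)
  then have "[x, inv_letter x] \<in> words n"
    by (simp add: inv_letter_def)
  with cancel have "f (u @ [x, inv_letter x] @ v) = f u \<otimes> (f [x, inv_letter x] \<otimes> f v)"
    by (simp only: f_append words_append)
  with cancel show ?case
    by (simp add: f_carrier f_cancel f_append)
next
  case (rel l r u v)
  then show ?case
    using vspg_rels_words[OF rel(1)] by (simp add: f_append f_rel)
qed simp_all

lemma induced_cls [simp]: "w \<in> words n \<Longrightarrow> induced f (cls n w) = f w"
  unfolding induced_def
  by (metis f_respects_vspg_eq mem_cls_iff someI vspg_eq.refl)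

lemma induced_hom: "induced f \<in> hom (VSPG n) H"
  by (rule homI) (auto elim!: carrier_VSPG_E simp: f_carrier f_append mult_VSPG_cls)

lemma group_hom_induced: "group_hom (VSPG n) H (induced f)"
  using induced_hom group_VSPG target.group_axioms by (simp add: group_hom_def group_hom_axioms_def)

end

definition VSPG_gens :: "nat \<Rightarrow> nat \<Rightarrow> word set set" where
  "VSPG_gens n k = (\<lambda>g. cls n [(g, True)]) ` {g. valid_gen k g}"

lemma VSPG_sub_eq_generate: "VSPG_sub n k = generate (VSPG n) (VSPG_gens n k)"
proof -
  have "VSPG_gens n k = {mu_el n i j | i j. in_range k i \<and> in_range k j \<and> i \<noteq> j}
      \<union> {ga_el n i j | i j. in_range k i \<and> in_range k j \<and> i \<noteq> j}"
    unfolding VSPG_gens_def mu_el_def ga_el_def mu_def ga_def in_range_def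
    by (auto elim!: valid_gen.elims intro: image_eqI[of _ _ "Mu _ _"] image_eqI[of _ _ "Ga _ _"])
  then show ?thesis
    by (simp add: VSPG_sub_def)
qed

lemma valid_gen_Suc_iff:
  "valid_gen (Suc k) g \<longleftrightarrow> valid_gen k g \<or>
     (\<exists>j. 1 \<le> j \<and> j < Suc k \<and> (g = Mu j (Suc k) \<or> g = Mu (Suc k) j \<or> g = Ga j (Suc k) \<or> g = Ga (Suc k) j))"
  by (cases g) auto

lemma VSPG_gens_Suc: "VSPG_gens n (Suc k) = VSPG_gens n k \<union> VS_gens n (Suc k)"
  unfolding VSPG_gens_def VS_gens_def valid_gen_Suc_iff mu_el_def ga_el_def mu_def ga_def
  by blast

lemma subgroup_cls_words:
  assumes "k \<le> n"
  shows "subgroup (cls n ` words k) (VSPG n)"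
proof (rule group.subgroupI[OF group_VSPG])
  have "words k \<subseteq> words n"
    using assms by (rule words_mono)
  then show "cls n ` words k \<subseteq> carrier (VSPG n)"
    by auto
  show "cls n ` words k \<noteq> {}"
    using words_Nil by blast
  show "inv\<^bsub>VSPG n\<^esub> a \<in> cls n ` words k" if a: "a \<in> cls n ` words k" for a
  proof -
    obtain u where "u \<in> words k" "a = cls n u"
      using a by blast
    then show ?thesis
      using \<open>words k \<subseteq> words n\<close> by (simp add: inv_VSPG_cls subset_iff)
  qed
  show "a \<otimes>\<^bsub>VSPG n\<^esub> b \<in> cls n ` words k" if ab: "a \<in> cls n ` words k" "b \<in> cls n ` words k" for a b
  proof -
    obtain u v where "u \<in> words k" "a = cls n u" "v \<in> words k" "b = cls n v"
      using ab by blast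
    then show ?thesis
      using \<open>words k \<subseteq> words n\<close> by (simp add: mult_VSPG_cls subset_iff)
  qed
qed

lemma cls_letter_in_VSPG_sub:
  assumes "valid_gen k (fst x)" "k \<le> n"
  shows "cls n [x] \<in> VSPG_sub n k"
proof -
  obtain g b where x: "x = (g, b)"
    by (cases x)
  have gen: "cls n [(g, True)] \<in> VSPG_gens n k"
    using assms(1) x by (simp add: VSPG_gens_def)
  show ?thesis
  proof (cases b)
    case True
    then show ?thesis
      using gen x by (simp add: VSPG_sub_eq_generate generate.incl)
  next
    case False
    have "[(g, True)] \<in> words n"
      using assms x by (simp add: valid_gen_mono)
    then have "cls n [x] = inv\<^bsub>VSPG n\<^esub> cls n [(g, True)]"
      using False x by (simp add: inv_VSPG_cls inv_word_def inv_letter_def)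
    then show ?thesis
      using gen by (simp add: VSPG_sub_eq_generate generate.inv)
  qed
qed

lemma VSPG_sub_eq_image:
  assumes "k \<le> n"
  shows "VSPG_sub n k = cls n ` words k"
proof
  have "VSPG_gens n k \<subseteq> cls n ` words k"
    by (auto simp: VSPG_gens_def)
  then show "VSPG_sub n k \<subseteq> cls n ` words k"
    unfolding VSPG_sub_eq_generate
    using assms by (intro group.generate_subgroup_incl[OF group_VSPG] subgroup_cls_words)
  have "cls n w \<in> VSPG_sub n k" if "w \<in> words k" for w
    using that
  proof (induction w)
    case Nil
    then show ?case
      unfolding VSPG_sub_eq_generate by (simp add: one_VSPG[symmetric] generate.one)
  next
    case (Cons x w)
    then have "x # w \<in> words n"
      using words_mono[OF assms] by blast
    then have "cls n [x] \<otimes>\<^bsub>VSPG n\<^esub> cls n w = cls n (x # w)"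
      using mult_VSPG_cls[of "[x]" n w] by simp
    moreover have "cls n [x] \<in> VSPG_sub n k"
      using Cons.prems assms by (simp add: cls_letter_in_VSPG_sub)
    moreover have "cls n w \<in> VSPG_sub n k"
      using Cons by simp
    ultimately show ?case
      unfolding VSPG_sub_eq_generate by (metis generate.eng)
  qed
  then show "cls n ` words k \<subseteq> VSPG_sub n k"
    by blast
qed

lemma subgroup_VSPG_sub: "k \<le> n \<Longrightarrow> subgroup (VSPG_sub n k) (VSPG n)"
  by (simp add: VSPG_sub_eq_image subgroup_cls_words)

lemma VSPG_sub_self: "VSPG_sub n n = carrier (VSPG n)"
  by (simp add: VSPG_sub_eq_image carrier_VSPG)

lemma VSPG_sub_mono: "m \<le> k \<Longrightarrow> k \<le> n \<Longrightarrow> VSPG_sub n m \<subseteq> VSPG_sub n k"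
  using words_mono[of m k] by (simp add: VSPG_sub_eq_image image_mono)

lemma VS_gens_subset_VSPG_sub: "VS_gens n (Suc k) \<subseteq> VSPG_sub n (Suc k)"
  unfolding VSPG_sub_eq_generate VSPG_gens_Suc by (blast intro: generate.incl)

section \<open>Deleting generators: the semidirect decomposition\<close>

definition restrict_word :: "nat \<Rightarrow> word \<Rightarrow> word" where
  "restrict_word k w = filter (\<lambda>x. valid_gen k (fst x)) w"

lemma restrict_word_rel:
  "(l, r) \<in> vspg_rels n \<Longrightarrow>
     restrict_word k l = restrict_word k r \<or> (restrict_word k l = l \<and> restrict_word k r = r)"
  unfolding vspg_rels_def mu_def ga_def in_range_def restrict_word_def
  by (elim UnE; clarsimp; (elim UnE)?; clarsimp split: if_splits)

lemma vspg_word_hom_restrict_word: "vspg_word_hom (VSPG n) n (\<lambda>w. cls n (restrict_word k w))"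
proof (intro vspg_word_hom.intro vspg_word_hom_axioms.intro group_VSPG)
  show "cls n (restrict_word k w) \<in> carrier (VSPG n)" if "w \<in> words n" for w
    using that by (simp add: restrict_word_def words_def)
  show "cls n (restrict_word k (u @ v)) = cls n (restrict_word k u) \<otimes>\<^bsub>VSPG n\<^esub> cls n (restrict_word k v)"
    if "u \<in> words n" "v \<in> words n" for u v
    using that by (simp add: restrict_word_def mult_VSPG_cls words_def)
  show "cls n (restrict_word k [x, inv_letter x]) = \<one>\<^bsub>VSPG n\<^esub>" if "valid_gen n (fst x)" for x
  proof -
    have "cls n [x, inv_letter x] = cls n []"
      using that vspg_eq.cancel[of "[]" n "[]" x] by (simp add: cls_eqI)
    then show ?thesis
      by (simp add: restrict_word_def inv_letter_def one_VSPG)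
  qed
  show "cls n (restrict_word k l) = cls n (restrict_word k r)" if "(l, r) \<in> vspg_rels n" for l r
    using restrict_word_rel[OF that, of k] vspg_eq.rel[OF that, of "[]" "[]"] cls_eqI by fastforce
qed

definition retraction :: "nat \<Rightarrow> nat \<Rightarrow> word set \<Rightarrow> word set" where
  "retraction n k = induced (\<lambda>w. cls n (restrict_word k w))"

lemma retraction_cls: "w \<in> words n \<Longrightarrow> retraction n k (cls n w) = cls n (restrict_word k w)"
  unfolding retraction_def by (rule vspg_word_hom.induced_cls[OF vspg_word_hom_restrict_word])

lemma group_hom_retraction: "group_hom (VSPG n) (VSPG n) (retraction n k)"
  unfolding retraction_def by (rule vspg_word_hom.group_hom_induced[OF vspg_word_hom_restrict_word])

lemma retraction_VSPG_sub: "k \<le> n \<Longrightarrow> x \<in> VSPG_sub n k \<Longrightarrow> retraction n k x = x"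
  using words_mono[of k n]
  by (auto simp: VSPG_sub_eq_image retraction_cls restrict_word_def words_def)

lemma retraction_VS_gens: "y \<in> VS_gens n (Suc k) \<Longrightarrow> Suc k \<le> n \<Longrightarrow> retraction n k y = \<one>\<^bsub>VSPG n\<^esub>"
  unfolding VS_gens_def mu_el_def ga_el_def mu_def ga_def
  by (auto simp: retraction_cls restrict_word_def one_VSPG)

lemma subgroup_VS_star: "Suc k \<le> n \<Longrightarrow> subgroup (VS_star n k) (VSPG n)"
  unfolding VS_star_def
  by (simp add: group.normal_closure_subgroup[OF group_VSPG] subgroup_VSPG_sub VS_gens_subset_VSPG_sub)

lemma VSPG_sub_Suc_semidirect:
  assumes "Suc k \<le> n"
  shows "internal_semidirect ((VSPG n)\<lparr>carrier := VSPG_sub n (Suc k)\<rparr>) (VS_star n k) (VSPG_sub n k)"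
proof -
  have "internal_semidirect ((VSPG n)\<lparr>carrier := VSPG_sub n (Suc k)\<rparr>)
      (normal_closure ((VSPG n)\<lparr>carrier := VSPG_sub n (Suc k)\<rparr>) (VS_gens n (Suc k))) (VSPG_sub n k)"
  proof (rule group.internal_semidirect_normal_closure[OF group_VSPG _ _ _ _ _ _ group_hom_retraction])
    show "VSPG_sub n (Suc k) = generate (VSPG n) (VSPG_gens n k \<union> VS_gens n (Suc k))"
      by (simp add: VSPG_sub_eq_generate VSPG_gens_Suc)
    show "VSPG_gens n k \<subseteq> VSPG_sub n k"
      unfolding VSPG_sub_eq_generate by (rule subsetI) (rule generate.incl)
    show "inj_on (retraction n k) (VSPG_sub n k)"
      using assms by (simp add: inj_on_def retraction_VSPG_sub)
  qed (use assms in \<open>simp_all add: subgroup_VSPG_sub VSPG_sub_mono VS_gens_subset_VSPG_sub retraction_VS_gens\<close>)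
  then show ?thesis
    by (simp add: VS_star_def)
qed

lemma VS_gens_two: "VS_gens n 2 = {mu_el n 1 2, mu_el n 2 1, ga_el n 1 2, ga_el n 2 1}"
  unfolding VS_gens_def by (auto simp: less_2_cases_iff)

lemma VSPG_gens_one: "VSPG_gens n 1 = {}"
  by (auto simp: VSPG_gens_def elim: valid_gen.elims)

lemma VS_star_one:
  assumes "2 \<le> n"
  shows "VS_star n 1 = VSPG_sub n 2"
    and "VSPG_sub n 2 = generate (VSPG n) {mu_el n 1 2, mu_el n 2 1, ga_el n 1 2, ga_el n 2 1}"
proof -
  have "VSPG_gens n 2 = VS_gens n 2"
    using VSPG_gens_Suc[of n 1] VSPG_gens_one by (simp add: numeral_2_eq_2)
  then have gen: "VSPG_sub n 2 = generate (VSPG n) (VS_gens n 2)"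
    by (simp add: VSPG_sub_eq_generate)
  then show "VSPG_sub n 2 = generate (VSPG n) {mu_el n 1 2, mu_el n 2 1, ga_el n 1 2, ga_el n 2 1}"
    by (simp add: VS_gens_two)
  show "VS_star n 1 = VSPG_sub n 2"
    unfolding VS_star_def one_add_one
    using group.normal_closure_generating_set[OF group_VSPG subgroup_VSPG_sub[OF assms] gen] .
qed

section \<open>VS_k^* is not finitely generated\<close>

text \<open>For a fixed index \<open>k \<ge> 3\<close>: \<open>\<mu>\<^sub>1\<^sub>2, \<mu>\<^sub>2\<^sub>1\<close> and their \<open>\<gamma>\<close> versions move the lamplighter,
  \<open>\<mu>\<^sub>1\<^sub>k, \<mu>\<^sub>k\<^sub>2\<close> raise the lamp at the origin, \<open>\<mu>\<^sub>2\<^sub>k, \<mu>\<^sub>k\<^sub>1\<close> lower it, and all other generators act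
  trivially. These signs make all defining relations hold.\<close>

definition wreath_gen :: "nat \<Rightarrow> nat \<Rightarrow> nat \<Rightarrow> (int \<Rightarrow> int) \<times> int" where
  "wreath_gen k i j =
     (\<lambda>x. if x \<noteq> 0 then 0
          else if (i, j) = (1, k) \<or> (i, j) = (k, 2) then 1
          else if (i, j) = (2, k) \<or> (i, j) = (k, 1) then -1 else 0,
      if (i, j) = (1, 2) \<or> (i, j) = (2, 1) then 1 else 0)"

fun wreath_gen_of :: "nat \<Rightarrow> gen \<Rightarrow> (int \<Rightarrow> int) \<times> int" where
  "wreath_gen_of k (Mu i j) = wreath_gen k i j"
| "wreath_gen_of k (Ga i j) = wreath_gen k i j"

definition wreath_letter :: "nat \<Rightarrow> letter \<Rightarrow> (int \<Rightarrow> int) \<times> int" where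
  "wreath_letter k x = (if snd x then wreath_gen_of k (fst x) else inv\<^bsub>int_wreath\<^esub> wreath_gen_of k (fst x))"

fun wreath_word :: "nat \<Rightarrow> word \<Rightarrow> (int \<Rightarrow> int) \<times> int" where
  "wreath_word k [] = \<one>\<^bsub>int_wreath\<^esub>"
| "wreath_word k (x # w) = wreath_letter k x \<otimes>\<^bsub>int_wreath\<^esub> wreath_word k w"

lemma wreath_gen_carrier [simp]: "wreath_gen k i j \<in> carrier int_wreath"
proof -
  have "{x. fst (wreath_gen k i j) x \<noteq> 0} \<subseteq> {0}"
    by (auto simp: wreath_gen_def)
  then show ?thesis
    by (simp add: int_wreath_def finite_subset)
qed

lemma wreath_gen_of_carrier [simp]: "wreath_gen_of k g \<in> carrier int_wreath"
  by (cases g) simp_all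

lemma wreath_letter_carrier [simp]: "wreath_letter k x \<in> carrier int_wreath"
  by (simp add: wreath_letter_def)

lemma wreath_word_carrier [simp]: "wreath_word k w \<in> carrier int_wreath"
  by (induction w) simp_all

lemma wreath_word_append: "wreath_word k (u @ v) = wreath_word k u \<otimes>\<^bsub>int_wreath\<^esub> wreath_word k v"
  by (induction u) (simp_all add: W.m_assoc)

lemma wreath_gen_triple:
  assumes "distinct [i, j, l]"
  shows "wreath_gen k i j \<otimes>\<^bsub>int_wreath\<^esub> (wreath_gen k i l \<otimes>\<^bsub>int_wreath\<^esub> wreath_gen k j l)
       = wreath_gen k j l \<otimes>\<^bsub>int_wreath\<^esub> (wreath_gen k i l \<otimes>\<^bsub>int_wreath\<^esub> wreath_gen k i j)"
  using assms by (auto simp: mult_int_wreath wreath_gen_def fun_eq_iff)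

lemma wreath_gen_commute:
  assumes "distinct [i, j, a, b]"
  shows "wreath_gen k i j \<otimes>\<^bsub>int_wreath\<^esub> wreath_gen k a b = wreath_gen k a b \<otimes>\<^bsub>int_wreath\<^esub> wreath_gen k i j"
  using assms by (auto simp: mult_int_wreath wreath_gen_def fun_eq_iff)

lemma wreath_word_rel:
  assumes "(l, r) \<in> vspg_rels n"
  shows "wreath_word k l = wreath_word k r"
  using assms unfolding vspg_rels_def mu_def ga_def
  by (elim UnE) (clarsimp simp: wreath_letter_def intro!: wreath_gen_triple wreath_gen_commute)+

lemma wreath_letter_inv: "wreath_letter k (inv_letter x) = inv\<^bsub>int_wreath\<^esub> wreath_letter k x"
  by (simp add: wreath_letter_def inv_letter_def)

lemma vspg_word_hom_wreath_word: "vspg_word_hom int_wreath n (wreath_word k)"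
  by (intro vspg_word_hom.intro vspg_word_hom_axioms.intro group_int_wreath)
    (simp_all add: wreath_word_append wreath_letter_inv wreath_word_rel)

definition wreath_rep :: "nat \<Rightarrow> word set \<Rightarrow> (int \<Rightarrow> int) \<times> int" where
  "wreath_rep k = induced (wreath_word k)"

lemma wreath_rep_cls: "w \<in> words n \<Longrightarrow> wreath_rep k (cls n w) = wreath_word k w"
  unfolding wreath_rep_def by (rule vspg_word_hom.induced_cls[OF vspg_word_hom_wreath_word])

lemma group_hom_wreath_rep: "group_hom (VSPG n) int_wreath (wreath_rep k)"
  unfolding wreath_rep_def by (rule vspg_word_hom.group_hom_induced[OF vspg_word_hom_wreath_word])

lemma VS_gens_wreath_shift:
  assumes "3 \<le> k" "k \<le> n" "y \<in> VS_gens n k"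
  shows "snd (wreath_rep k y) = 0"
  using assms unfolding VS_gens_def mu_el_def ga_el_def mu_def ga_def
  by (auto simp: wreath_rep_cls wreath_letter_def wreath_gen_def mult_int_wreath one_int_wreath)

lemma VS_star_shift_zero:
  assumes "2 \<le> m" "Suc m \<le> n"
  shows "VS_star n m \<subseteq> kernel (VSPG n) integer_group (snd \<circ> wreath_rep (Suc m))"
proof -
  have "group_hom (VSPG n) integer_group (snd \<circ> wreath_rep (Suc m))"
    using hom_compose[OF group_hom.homh[OF group_hom_wreath_rep] snd_hom_int_wreath]
    by (simp add: group_hom_def group_hom_axioms_def group_VSPG)
  moreover have "VS_gens n (Suc m) \<subseteq> kernel (VSPG n) integer_group (snd \<circ> wreath_rep (Suc m))"
    using VS_gens_subset_VSPG_sub subgroup.subset[OF subgroup_VSPG_sub[OF assms(2)]] VS_gens_wreath_shift assms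
    by (fastforce simp: kernel_def)
  ultimately show ?thesis
    unfolding VS_star_def using assms(2)
    by (simp add: group.normal_closure_subset[OF group_VSPG] group_hom.normal_kernel
        subgroup_VSPG_sub VS_gens_subset_VSPG_sub)
qed

lemma wreath_word_shift_power:
  assumes "3 \<le> k"
  shows "wreath_word k (replicate N (Mu 1 2, True)) = (\<lambda>_. 0, int N)"
  using assms by (induction N) (auto simp: wreath_letter_def wreath_gen_def mult_int_wreath one_int_wreath)

lemma VS_star_lamp:
  assumes "2 \<le> m" "Suc m \<le> n"
  shows "\<exists>z \<in> VS_star n m. fst (wreath_rep (Suc m) z) (int N) = 1"
proof -
  interpret G: group "VSPG n"
    by (rule group_VSPG)
  interpret \<phi>: group_hom "VSPG n" int_wreath "wreath_rep (Suc m)"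
    by (rule group_hom_wreath_rep)
  let ?\<phi> = "wreath_rep (Suc m)"
  define g where "g = cls n (replicate N (Mu 1 2, True))"
  define t where "t = mu_el n 1 (Suc m)"
  have g_words: "replicate N (Mu 1 2, True) \<in> words (Suc m)"
    using assms(1) by (simp add: words_def)
  then have g_sub: "g \<in> VSPG_sub n (Suc m)"
    unfolding g_def using assms(2) by (simp add: VSPG_sub_eq_image)
  have t_words: "mu 1 (Suc m) \<in> words n"
    using assms by (simp add: mu_def)
  have t_val: "?\<phi> t = wreath_gen (Suc m) 1 (Suc m)"
    using t_words by (simp add: t_def mu_el_def wreath_rep_cls mu_def wreath_letter_def)
  have t_gen: "t \<in> VS_gens n (Suc m)"
    unfolding t_def VS_gens_def using assms(1) by (intro CollectI exI[of _ 1]) simp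
  have "g \<otimes>\<^bsub>VSPG n\<^esub> t \<otimes>\<^bsub>VSPG n\<^esub> inv\<^bsub>VSPG n\<^esub> g \<in> VS_star n m"
    unfolding VS_star_def
    using G.conj_in_normal_closure[OF subgroup_VSPG_sub[OF assms(2)] g_sub t_gen] by simp
  moreover have "?\<phi> (g \<otimes>\<^bsub>VSPG n\<^esub> t \<otimes>\<^bsub>VSPG n\<^esub> inv\<^bsub>VSPG n\<^esub> g) = (\<lambda>x. fst (?\<phi> t) (x - int N), 0)"
  proof -
    have "?\<phi> g = (\<lambda>_. 0, int N)"
      unfolding g_def using g_words words_mono[OF assms(2)] wreath_word_shift_power[of "Suc m" N] assms(1)
      by (simp add: subset_iff wreath_rep_cls)
    moreover have "?\<phi> t = (fst (?\<phi> t), 0)" "?\<phi> t \<in> carrier int_wreath"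
      using assms(1) by (simp_all add: t_val) (simp add: wreath_gen_def)
    moreover have "g \<in> carrier (VSPG n)" "t \<in> carrier (VSPG n)"
      using g_sub subgroup.subset[OF subgroup_VSPG_sub[OF assms(2)]] t_words by (auto simp: t_def mu_el_def)
    ultimately show ?thesis
      using conj_shift_int_wreath[of "fst (?\<phi> t)" "int N"] by simp
  qed
  moreover have "fst (?\<phi> t) 0 = 1"
    by (simp add: t_val wreath_gen_def)
  ultimately show ?thesis
    by (metis diff_self fst_conv)
qed

lemma VS_star_not_finitely_generated:
  assumes "2 \<le> m" "Suc m \<le> n"
  shows "\<not> finitely_generated_subgroup (VSPG n) (VS_star n m)"
proof
  assume "finitely_generated_subgroup (VSPG n) (VS_star n m)"
  then obtain D where D: "VS_star n m \<subseteq> {x \<in> carrier (VSPG n). wreath_rep (Suc m) x \<in> bounded_base D}"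
    using finitely_generated_bounded_base[OF group_hom_wreath_rep subgroup_VS_star[OF assms(2)]]
      VS_star_shift_zero[OF assms] by (auto simp: kernel_def)
  obtain z where "z \<in> VS_star n m" "fst (wreath_rep (Suc m) z) (int (nat D + 1)) = 1"
    using VS_star_lamp[OF assms] by blast
  with D show False
    by (auto simp: bounded_base_def)
qed

theorem mainTheorem12:
  fixes n :: nat
  assumes "n \<ge> 2"
  shows "group (VSPG n)
    \<and> VSPG_sub n n = carrier (VSPG n)
    \<and> (\<forall>k \<in> {2..n}. internal_semidirect ((VSPG n)\<lparr>carrier := VSPG_sub n k\<rparr>)
                       (VS_star n (k - 1)) (VSPG_sub n (k - 1)))
    \<and> (\<forall>k \<in> {3..n}. subgroup (VS_star n (k - 1)) (VSPG n)
                     \<and> \<not> finitely_generated_subgroup (VSPG n) (VS_star n (k - 1)))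
    \<and> VSPG_sub n 2 = VS_star n 1
    \<and> VS_star n 1 = generate (VSPG n) {mu_el n 1 2, mu_el n 2 1, ga_el n 1 2, ga_el n 2 1}"
proof (intro conjI ballI)
  show "group (VSPG n)"
    by (rule group_VSPG)
  show "VSPG_sub n n = carrier (VSPG n)"
    by (rule VSPG_sub_self)
  show "VSPG_sub n 2 = VS_star n 1" "VS_star n 1 = generate (VSPG n) {mu_el n 1 2, mu_el n 2 1, ga_el n 1 2, ga_el n 2 1}"
    using VS_star_one[OF assms] by simp_all
next
  fix k assume "k \<in> {2..n}"
  then have "Suc (k - 1) = k" "Suc (k - 1) \<le> n"
    by auto
  then show "internal_semidirect ((VSPG n)\<lparr>carrier := VSPG_sub n k\<rparr>) (VS_star n (k - 1)) (VSPG_sub n (k - 1))"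
    using VSPG_sub_Suc_semidirect[of "k - 1" n] by simp
next
  fix k assume "k \<in> {3..n}"
  then have "2 \<le> k - 1" "Suc (k - 1) \<le> n"
    by auto
  then show "subgroup (VS_star n (k - 1)) (VSPG n)" "\<not> finitely_generated_subgroup (VSPG n) (VS_star n (k - 1))"
    by (simp_all add: subgroup_VS_star VS_star_not_finitely_generated)
qed

end
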